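(* Let $Q\subset\mathbb{R}^n$ be a cube and $f$ a locally integrable function that is not constant on $Q$. Then for every $\lambda>0$, \[ \left|\left\{x\in Q:\frac{M\big((f-f_Q)\mathbf 1_Q\big)(x)}{M^\sharp f(x)}>\lambda\right\}\right|\le Ce^{-c\lambda}|Q|, \] where $C,c>0$ are constants depending only on $n$.
   Context: $M$ is the Hardy–Littlewood maximal operator over cubes, $f_Q=\frac1{|Q|}\int_Qf$, and $M^\sharp f(x)=\sup_{R\ni x}\frac1{|R|}\int_R|f-f_R|$, the supremum over cubes $R$ containing $x$. *)

theory Defs
  imports "HOL-Analysis.Analysis"
begin

definition is_cube :: "'a::euclidean_space set \<Rightarrow> bool" where
  "is_cube Q \<longleftrightarrow> (\<exists>a h. h > 0 \<and> Q = cbox a (a + h *\<^sub>R One))"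

definition locally_integrable :: "('a::euclidean_space \<Rightarrow> real) \<Rightarrow> bool" where
  "locally_integrable f \<longleftrightarrow> (\<forall>K. compact K \<longrightarrow> set_integrable lebesgue K f)"

definition avg :: "('a::euclidean_space \<Rightarrow> real) \<Rightarrow> 'a set \<Rightarrow> real" where
  "avg f Q = (LINT y:Q|lebesgue. f y) / measure lebesgue Q"

definition maxop :: "('a::euclidean_space \<Rightarrow> real) \<Rightarrow> 'a \<Rightarrow> ennreal" where
  "maxop g x = (SUP R\<in>{R. is_cube R \<and> x \<in> R}.
      (set_nn_integral lebesgue R (\<lambda>y. ennreal \<bar>g y\<bar>)) / emeasure lebesgue R)"

definition sharp :: "('a::euclidean_space \<Rightarrow> real) \<Rightarrow> 'a \<Rightarrow> ennreal" where
  "sharp f x = (SUP R\<in>{R. is_cube R \<and> x \<in> R}.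
      (set_nn_integral lebesgue R (\<lambda>y. ennreal \<bar>f y - avg f R\<bar>)) / emeasure lebesgue R)"

text \<open>Lebesgue outer measure (so that no measurability issue can trivialize a bound).\<close>
definition outer_lmeasure :: "'a::euclidean_space set \<Rightarrow> ennreal" where
  "outer_lmeasure S = (INF T\<in>{T\<in>sets lebesgue. S \<subseteq> T}. emeasure lebesgue T)"

end

theory Submission
  imports Defs
begin

(*
  A dyadic Calderon--Zygmund stopping time at height twice the mean oscillation of f on a
  dyadic cube selects disjoint subcubes covering at most half of it, and across each of them the
  dyadic averages of f jump by at most 2^(n+1) times that oscillation, hence by at most
  2^(n+1) M#f at every point. Iterating, the points of Q at which some dyadic average along their
  chain differs from f_Q by more than m 2^(n+1) M#f lie in the m-th generation of stopping cubes,
  of measure at most 2^-m |Q|. Finally every cube R through a point x of Q is covered, within Q,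
  by a cube T of measure at most 4^n |R| which contains a dyadic cube D through x of measure at
  least 2^-n |T|; so the average of |(f - f_Q) 1_Q| over R is at most
  4^n ((1 + 2^n) M#f(x) + |f_D - f_Q|), and the ratio exceeding t forces a dyadic jump of size
  about t 4^-n M#f(x), which happens on a set of measure C e^(-c t) |Q|.
*)

lemma emeasure_cube:
  fixes b :: "'a::euclidean_space"
  assumes "s \<ge> 0"
  shows "emeasure lebesgue (cbox b (b + s *\<^sub>R One)) = ennreal (s ^ DIM('a))"
  using assms by (simp add: emeasure_lborel_cbox_eq inner_add_left prod_constant)

lemma measure_cube:
  fixes b :: "'a::euclidean_space"
  assumes "s \<ge> 0"
  shows "measure lebesgue (cbox b (b + s *\<^sub>R One)) = s ^ DIM('a)"
  using emeasure_cube[OF assms, of b] assms by (simp add: measure_def)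

lemma mem_cube:
  fixes b :: "'a::euclidean_space"
  shows "y \<in> cbox b (b + s *\<^sub>R One) \<longleftrightarrow> (\<forall>i\<in>Basis. b \<bullet> i \<le> y \<bullet> i \<and> y \<bullet> i \<le> b \<bullet> i + s)"
  by (simp add: mem_box inner_add_left)

lemma cube_minus_box_null: "cbox b (b + s *\<^sub>R One) - box b (b + s *\<^sub>R One) \<in> null_sets lebesgue"
  using negligible_frontier_interval negligible_iff_null_sets by blast

lemma outer_lmeasure_le: "T \<in> sets lebesgue \<Longrightarrow> S \<subseteq> T \<Longrightarrow> outer_lmeasure S \<le> emeasure lebesgue T"
  unfolding outer_lmeasure_def by (rule INF_lower) blast

lemma ennreal_mult_less_of_less_divide:
  assumes "s > 0" "t \<ge> 0" "ennreal t < a / ennreal s"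
  shows "ennreal (t * s) < a"
proof (rule ccontr)
  assume "\<not> ennreal (t * s) < a"
  then have "a / ennreal s \<le> ennreal (t * s) / ennreal s"
    by (intro divide_right_mono_ennreal) simp
  also have "\<dots> = ennreal t"
    using assms(1,2) by (simp add: divide_ennreal)
  finally show False
    using assms(3) by simp
qed

section \<open>Mean oscillation\<close>

definition deviation :: "('a::euclidean_space \<Rightarrow> real) \<Rightarrow> 'a set \<Rightarrow> real \<Rightarrow> real" where
  "deviation f S c = (LINT y:S|lebesgue. \<bar>f y - c\<bar>)"

definition mean_osc :: "('a::euclidean_space \<Rightarrow> real) \<Rightarrow> 'a set \<Rightarrow> real" where
  "mean_osc f S = deviation f S (avg f S) / measure lebesgue S"

lemma deviation_nonneg: "deviation f S c \<ge> 0"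
  unfolding deviation_def set_lebesgue_integral_def
  by (rule integral_nonneg_AE) (auto split: split_indicator)

lemma mean_osc_nonneg: "mean_osc f S \<ge> 0"
  unfolding mean_osc_def by (simp add: deviation_nonneg)

lemma deviation_avg_eq:
  "measure lebesgue S \<noteq> 0 \<Longrightarrow> deviation f S (avg f S) = mean_osc f S * measure lebesgue S"
  unfolding mean_osc_def by simp

locale locally_integrable_function =
  fixes f :: "'a::euclidean_space \<Rightarrow> real"
  assumes locally_integrable: "locally_integrable f"
begin

context
  fixes S :: "'a set"
  assumes S: "S \<in> sets lebesgue" "bounded S"
begin

lemma set_integrable_bounded: "set_integrable lebesgue S f"
proof -
  obtain r where "S \<subseteq> cbox (- r) r"
    using bounded_subset_cbox_symmetric S(2) by blast
  then show ?thesis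
    using locally_integrable S(1) unfolding locally_integrable_def
    by (metis compact_cbox set_integrable_subset)
qed

lemma set_integral_const_bounded: "(LINT y:S|lebesgue. c) = c * measure lebesgue S"
  using set_integral_const[of S lebesgue c] fmeasurableD2[OF bounded_set_imp_lmeasurable[OF S(2,1)]] S(1)
  by (simp add: mult.commute)

lemma set_integrable_const_bounded: "set_integrable lebesgue S (\<lambda>_. c :: real)"
  using bounded_set_imp_lmeasurable[OF S(2,1)] by simp

lemma set_integrable_abs_diff: "set_integrable lebesgue S (\<lambda>y. \<bar>f y - c\<bar>)"
  by (intro set_integrable_abs set_integral_diff(1)[OF set_integrable_bounded set_integrable_const_bounded])

lemma set_nn_integral_eq_deviation:
  "(\<integral>\<^sup>+y\<in>S. ennreal \<bar>f y - c\<bar> \<partial>lebesgue) = ennreal (deviation f S c)"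
proof -
  have "integrable lebesgue (\<lambda>y. indicator S y *\<^sub>R \<bar>f y - c\<bar>)"
    using set_integrable_abs_diff unfolding set_integrable_def .
  then have "(\<integral>\<^sup>+y. ennreal (indicator S y *\<^sub>R \<bar>f y - c\<bar>) \<partial>lebesgue)
      = ennreal (integral\<^sup>L lebesgue (\<lambda>y. indicator S y *\<^sub>R \<bar>f y - c\<bar>))"
    by (rule nn_integral_eq_integral) (auto split: split_indicator)
  moreover have "(\<lambda>y. ennreal (indicator S y *\<^sub>R \<bar>f y - c\<bar>)) = (\<lambda>y. ennreal \<bar>f y - c\<bar> * indicator S y)"
    by (auto split: split_indicator)
  ultimately show ?thesis unfolding deviation_def set_lebesgue_integral_def by simp
qed

lemma deviation_le_add: "deviation f S c \<le> deviation f S c' + \<bar>c - c'\<bar> * measure lebesgue S"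
proof -
  have "deviation f S c \<le> (LINT y:S|lebesgue. \<bar>f y - c'\<bar> + \<bar>c - c'\<bar>)"
    unfolding deviation_def using set_integrable_abs_diff set_integrable_const_bounded
    by (intro set_integral_mono) auto
  also have "\<dots> = deviation f S c' + \<bar>c - c'\<bar> * measure lebesgue S"
    unfolding deviation_def using set_integrable_abs_diff set_integrable_const_bounded
    by (simp add: set_integral_const_bounded)
  finally show ?thesis .
qed

lemma abs_avg_diff_le_deviation: "\<bar>avg f S - c\<bar> * measure lebesgue S \<le> deviation f S c"
proof (cases "measure lebesgue S = 0")
  case False
  then have "(avg f S - c) * measure lebesgue S = (LINT y:S|lebesgue. f y) - c * measure lebesgue S"
    by (simp add: avg_def field_simps)
  also have "\<dots> = (LINT y:S|lebesgue. f y - c)"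
    using set_integrable_bounded set_integrable_const_bounded by (simp add: set_integral_const_bounded)
  finally have "\<bar>avg f S - c\<bar> * measure lebesgue S = \<bar>LINT y:S|lebesgue. f y - c\<bar>"
    by (metis abs_mult abs_of_nonneg measure_nonneg)
  also have "\<dots> \<le> deviation f S c"
    unfolding deviation_def
    using set_integral_norm_bound[OF set_integral_diff(1)[OF set_integrable_bounded set_integrable_const_bounded]]
    by simp
  finally show ?thesis .
qed (simp add: deviation_nonneg)

lemma deviation_eq_0_imp_AE_eq:
  assumes "deviation f S c = 0"
  shows "AE x in lebesgue. x \<in> S \<longrightarrow> f x = c"
proof -
  have "(\<lambda>y. ennreal \<bar>f y - c\<bar> * indicator S y) \<in> borel_measurable lebesgue"
    using set_integrable_abs_diff unfolding set_integrable_def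
    by (auto dest!: borel_measurable_integrable simp: indicator_mult_ennreal mult.commute)
  then have "AE y in lebesgue. ennreal \<bar>f y - c\<bar> * indicator S y = 0"
    using set_nn_integral_eq_deviation[of c] assms by (simp add: nn_integral_0_iff_AE)
  then show ?thesis
    by (rule AE_mp) (auto split: split_indicator)
qed

end

lemma deviation_mono:
  assumes "S \<in> sets lebesgue" "T \<in> sets lebesgue" "S \<subseteq> T" "bounded T"
  shows "deviation f S c \<le> deviation f T c"
proof -
  have "bounded S" using assms(3,4) bounded_subset by blast
  then have "ennreal (deviation f S c) \<le> ennreal (deviation f T c)"
    using assms set_nn_integral_eq_deviation nn_set_integral_set_mono[OF assms(3)] by metis
  then show ?thesis by (simp add: deviation_nonneg)
qed

lemma mean_osc_le_sharp:
  assumes "is_cube R" "x \<in> R"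
  shows "ennreal (mean_osc f R) \<le> sharp f x"
proof -
  obtain b s where s: "s > 0" and R: "R = cbox b (b + s *\<^sub>R One)"
    using assms(1) unfolding is_cube_def by blast
  have "ennreal (mean_osc f R) = ennreal (deviation f R (avg f R)) / ennreal (s ^ DIM('a))"
    unfolding mean_osc_def R measure_cube[OF less_imp_le[OF s]]
    using s by (simp add: divide_ennreal deviation_nonneg)
  also have "\<dots> = (\<integral>\<^sup>+y\<in>R. ennreal \<bar>f y - avg f R\<bar> \<partial>lebesgue) / emeasure lebesgue R"
    using set_nn_integral_eq_deviation[of R] emeasure_cube[OF less_imp_le[OF s], of b] by (simp add: R)
  also have "\<dots> \<le> sharp f x"
    unfolding sharp_def using assms by (intro SUP_upper) auto
  finally show ?thesis .
qed

lemma emeasure_density_deviation: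
  assumes B: "B \<in> sets lebesgue" "bounded B" and T: "T \<in> sets lebesgue" "T \<subseteq> B"
  shows "emeasure (density lebesgue (\<lambda>y. ennreal \<bar>f y - c\<bar> * indicator B y)) T = ennreal (deviation f T c)"
proof -
  have "(\<lambda>y. indicator B y *\<^sub>R \<bar>f y - c\<bar>) \<in> borel_measurable lebesgue"
    using set_integrable_abs_diff[OF B] unfolding set_integrable_def by blast
  then have "(\<lambda>y. ennreal \<bar>f y - c\<bar> * indicator B y) \<in> borel_measurable lebesgue"
    by (simp add: indicator_mult_ennreal mult.commute)
  then have "emeasure (density lebesgue (\<lambda>y. ennreal \<bar>f y - c\<bar> * indicator B y)) T
      = (\<integral>\<^sup>+y\<in>T. ennreal \<bar>f y - c\<bar> \<partial>lebesgue)"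
    using T by (auto simp: emeasure_density intro!: nn_integral_cong split: split_indicator)
  also have "\<dots> = ennreal (deviation f T c)"
    using T B bounded_subset by (blast intro: set_nn_integral_eq_deviation)
  finally show ?thesis .
qed

lemma emeasure_UN_le_deviation:
  assumes I: "countable I" "disjoint_family_on S I"
    and S: "\<And>d. d \<in> I \<Longrightarrow> S d \<in> sets lebesgue \<and> S d \<subseteq> B"
    and B: "B \<in> sets lebesgue" "bounded B"
    and large: "\<And>d. d \<in> I \<Longrightarrow> \<kappa> * measure lebesgue (S d) \<le> deviation f (S d) c"
    and "\<kappa> \<ge> 0"
  shows "ennreal \<kappa> * emeasure lebesgue (\<Union>(S ` I)) \<le> ennreal (deviation f B c)"
proof -
  let ?\<nu> = "density lebesgue (\<lambda>y. ennreal \<bar>f y - c\<bar> * indicator B y)"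
  have "ennreal \<kappa> * emeasure lebesgue (\<Union>(S ` I))
      = (\<integral>\<^sup>+d. ennreal \<kappa> * emeasure lebesgue (S d) \<partial>count_space I)"
    using S I by (simp add: emeasure_UN_countable nn_integral_cmult)
  also have "\<dots> \<le> (\<integral>\<^sup>+d. emeasure ?\<nu> (S d) \<partial>count_space I)"
  proof (rule nn_integral_mono)
    fix d assume "d \<in> space (count_space I)"
    then have d: "d \<in> I" by simp
    have "S d \<in> lmeasurable"
      using S[OF d] B(2) bounded_subset bounded_set_imp_lmeasurable by blast
    then have "ennreal \<kappa> * emeasure lebesgue (S d) = ennreal (\<kappa> * measure lebesgue (S d))"
      using \<open>\<kappa> \<ge> 0\<close> by (simp add: ennreal_mult emeasure_eq_ennreal_measure[OF fmeasurableD2])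
    also have "\<dots> \<le> emeasure ?\<nu> (S d)"
      using large[OF d] S[OF d] B by (simp add: emeasure_density_deviation ennreal_leI)
    finally show "ennreal \<kappa> * emeasure lebesgue (S d) \<le> emeasure ?\<nu> (S d)" .
  qed
  also have "\<dots> = emeasure ?\<nu> (\<Union>(S ` I))"
    using S I by (intro emeasure_UN_countable[symmetric]) auto
  also have "\<dots> \<le> emeasure ?\<nu> B"
    using S B by (intro emeasure_mono) auto
  also have "\<dots> = ennreal (deviation f B c)"
    using B by (simp add: emeasure_density_deviation)
  finally show ?thesis .
qed

lemma mean_osc_pos_if_nonconstant:
  assumes "S \<in> sets lebesgue" "bounded S" "\<not> (\<exists>k. AE x in lebesgue. x \<in> S \<longrightarrow> f x = k)"
  shows "mean_osc f S > 0"
proof -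
  have "deviation f S (avg f S) \<noteq> 0"
    using deviation_eq_0_imp_AE_eq assms by blast
  then have "deviation f S (avg f S) > 0"
    using deviation_nonneg by (simp add: order_less_le)
  moreover have "measure lebesgue S \<noteq> 0"
  proof
    assume "measure lebesgue S = 0"
    then have "S \<in> null_sets lebesgue"
      using bounded_set_imp_lmeasurable[OF assms(2,1)] by (simp add: null_sets_def emeasure_eq_measure2)
    then have "AE x in lebesgue. x \<in> S \<longrightarrow> f x = 0"
      by (rule AE_mp[OF AE_not_in]) blast
    then show False using assms(3) by blast
  qed
  ultimately show ?thesis
    unfolding mean_osc_def by (simp add: order_less_le)
qed

lemma abs_avg_diff_le_mean_osc:
  assumes "D \<in> sets lebesgue" "T \<in> sets lebesgue" "D \<subseteq> T" "bounded T" "measure lebesgue D > 0"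
  shows "\<bar>avg f D - avg f T\<bar> * measure lebesgue D \<le> mean_osc f T * measure lebesgue T"
proof -
  have "measure lebesgue D \<le> measure lebesgue T"
    by (rule measure_mono_fmeasurable[OF assms(3,1) bounded_set_imp_lmeasurable[OF assms(4,2)]])
  then have "measure lebesgue T \<noteq> 0"
    using assms(5) by linarith
  have "\<bar>avg f D - avg f T\<bar> * measure lebesgue D \<le> deviation f D (avg f T)"
    using assms(1) bounded_subset[OF assms(4,3)] by (rule abs_avg_diff_le_deviation)
  also have "\<dots> \<le> deviation f T (avg f T)"
    using assms(1-4) by (rule deviation_mono)
  also have "\<dots> = mean_osc f T * measure lebesgue T"
    using \<open>measure lebesgue T \<noteq> 0\<close> by (rule deviation_avg_eq)
  finally show ?thesis .
qed

lemma deviation_le_mean_osc_add: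
  assumes "T \<in> sets lebesgue" "bounded T" "measure lebesgue T \<noteq> 0"
  shows "deviation f T c \<le> measure lebesgue T * (mean_osc f T + \<bar>avg f T - c\<bar>)"
  using deviation_le_add[OF assms(1,2), of c "avg f T"] deviation_avg_eq[OF assms(3)]
  by (simp add: distrib_left abs_minus_commute mult.commute)

lemma deviation_le_sharp_add:
  assumes T: "is_cube T" "x \<in> T" and s: "sharp f x = ennreal s" "s \<ge> 0"
    and D: "D \<in> sets lebesgue" "D \<subseteq> T" "measure lebesgue D > 0"
    and K: "measure lebesgue T \<le> K * measure lebesgue D"
  shows "deviation f T c \<le> measure lebesgue T * ((1 + K) * s + \<bar>avg f D - c\<bar>)"
proof -
  have T_sets: "T \<in> sets lebesgue" "bounded T"
    using T(1) unfolding is_cube_def by auto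
  have "ennreal (mean_osc f T) \<le> ennreal s"
    using mean_osc_le_sharp[OF T] s(1) by simp
  then have osc: "mean_osc f T \<le> s"
    using s(2) by simp
  have "measure lebesgue D \<le> measure lebesgue T"
    by (rule measure_mono_fmeasurable[OF D(2,1) bounded_set_imp_lmeasurable[OF T_sets(2,1)]])
  then have T_pos: "measure lebesgue T \<noteq> 0"
    using D(3) by linarith
  have "\<bar>avg f D - avg f T\<bar> * measure lebesgue D \<le> mean_osc f T * measure lebesgue T"
    using D T_sets by (intro abs_avg_diff_le_mean_osc) auto
  also have "\<dots> \<le> s * measure lebesgue T"
    by (rule mult_right_mono[OF osc measure_nonneg])
  also have "\<dots> \<le> s * (K * measure lebesgue D)"
    by (rule mult_left_mono[OF K s(2)])
  also have "\<dots> = (K * s) * measure lebesgue D"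
    by simp
  finally have "\<bar>avg f D - avg f T\<bar> \<le> K * s"
    using D(3) by simp
  then have "mean_osc f T + \<bar>avg f T - c\<bar> \<le> (1 + K) * s + \<bar>avg f D - c\<bar>"
    using osc by (simp add: algebra_simps)
  then show ?thesis
    using deviation_le_mean_osc_add[OF T_sets T_pos, of c] T_pos
    by (meson measure_nonneg mult_left_mono order_trans)
qed

lemma set_nn_integral_indicator_le_deviation:
  assumes "T \<in> sets lebesgue" "bounded T" "R \<inter> Q \<subseteq> T"
  shows "(\<integral>\<^sup>+y\<in>R. ennreal \<bar>indicator Q y * (f y - c)\<bar> \<partial>lebesgue) \<le> ennreal (deviation f T c)"
proof -
  have "(\<integral>\<^sup>+y\<in>R. ennreal \<bar>indicator Q y * (f y - c)\<bar> \<partial>lebesgue)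
      \<le> (\<integral>\<^sup>+y\<in>T. ennreal \<bar>f y - c\<bar> \<partial>lebesgue)"
    using assms(3) by (intro nn_integral_mono) (auto split: split_indicator)
  also have "\<dots> = ennreal (deviation f T c)"
    using assms(1,2) by (rule set_nn_integral_eq_deviation)
  finally show ?thesis .
qed

end

section \<open>Halving trees\<close>

locale halving_tree =
  fixes M :: "'b measure" and C :: "'i \<Rightarrow> 'b set" and children :: "'i \<Rightarrow> 'i set"
  assumes sets_C: "\<And>n. C n \<in> sets M"
    and countable_children: "\<And>n. countable (children n)"
    and children_subset: "\<And>n d. d \<in> children n \<Longrightarrow> C d \<subseteq> C n"
    and disjoint_children: "\<And>n. disjoint_family_on C (children n)"
    and halving: "\<And>n. 2 * emeasure M (\<Union>(C ` children n)) \<le> emeasure M (C n)"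
begin

primrec descendants :: "nat \<Rightarrow> 'i \<Rightarrow> 'b set" where
  "descendants 0 n = C n"
| "descendants (Suc m) n = \<Union>(descendants m ` children n)"

lemma descendants_subset: "descendants m n \<subseteq> C n"
  by (induction m arbitrary: n) (auto dest: children_subset)

lemma sets_descendants: "descendants m n \<in> sets M"
  by (induction m arbitrary: n) (auto intro!: sets.countable_UN' countable_children sets_C)

lemma emeasure_descendants_le: "2 ^ m * emeasure M (descendants m n) \<le> emeasure M (C n)"
proof (induction m arbitrary: n)
  case (Suc m)
  have disjoint: "disjoint_family_on (descendants m) (children n)"
    using disjoint_children[of n] descendants_subset unfolding disjoint_family_on_def by blast
  have "2 ^ Suc m * emeasure M (descendants (Suc m) n)
      = 2 * (\<integral>\<^sup>+d. 2 ^ m * emeasure M (descendants m d) \<partial>count_space (children n))"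
    using sets_descendants countable_children disjoint
    by (simp add: emeasure_UN_countable nn_integral_cmult mult.assoc)
  also have "\<dots> \<le> 2 * (\<integral>\<^sup>+d. emeasure M (C d) \<partial>count_space (children n))"
    using Suc by (intro mult_left_mono nn_integral_mono) auto
  also have "\<dots> = 2 * emeasure M (\<Union>(C ` children n))"
    using sets_C countable_children disjoint_children by (simp add: emeasure_UN_countable)
  also have "\<dots> \<le> emeasure M (C n)"
    by (rule halving)
  finally show ?case .
qed simp

end

section \<open>Dyadic cubes\<close>

lemma floor_divide_refine:
  fixes u s :: real and d :: nat
  assumes "0 \<le> u" "0 < s"
  shows "real_of_int \<lfloor>u / s\<rfloor> * s \<le> real_of_int \<lfloor>u / (s / 2 ^ d)\<rfloor> * (s / 2 ^ d)"
    and "(real_of_int \<lfloor>u / (s / 2 ^ d)\<rfloor> + 1) * (s / 2 ^ d) \<le> (real_of_int \<lfloor>u / s\<rfloor> + 1) * s"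
proof -
  define k where "k = \<lfloor>u / s\<rfloor>"
  define k' where "k' = \<lfloor>u / (s / 2 ^ d)\<rfloor>"
  have s2: "s = 2 ^ d * (s / 2 ^ d)" and pos: "0 < s / 2 ^ d"
    using assms by simp_all
  have e: "u / (s / 2 ^ d) = u / s * 2 ^ d"
    using assms by (simp add: field_simps)
  have "real_of_int k \<le> u / s"
    unfolding k_def by linarith
  then have "real_of_int k * 2 ^ d \<le> u / s * 2 ^ d"
    by (rule mult_right_mono) simp
  then have "real_of_int (k * 2 ^ d) \<le> u / (s / 2 ^ d)"
    unfolding e by simp
  then have lower: "k * 2 ^ d \<le> k'"
    unfolding k'_def by (simp add: le_floor_iff)
  have "u / s * 2 ^ d < (real_of_int k + 1) * 2 ^ d"
    unfolding k_def by (intro mult_strict_right_mono) (linarith, simp)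
  then have "u / (s / 2 ^ d) < real_of_int ((k + 1) * 2 ^ d)"
    unfolding e by simp
  then have "real_of_int k' < real_of_int ((k + 1) * 2 ^ d)"
    unfolding k'_def by linarith
  then have upper: "k' + 1 \<le> (k + 1) * 2 ^ d"
    by linarith
  have "real_of_int k * s = real_of_int (k * 2 ^ d) * (s / 2 ^ d)"
    by (subst s2) (simp add: field_simps)
  also have "\<dots> \<le> real_of_int k' * (s / 2 ^ d)"
    using lower pos by (intro mult_right_mono) (simp_all only: of_int_le_iff less_imp_le)
  finally show "real_of_int k * s \<le> real_of_int k' * (s / 2 ^ d)" .
  have "(real_of_int k' + 1) * (s / 2 ^ d) = real_of_int (k' + 1) * (s / 2 ^ d)"
    by simp
  also have "\<dots> \<le> real_of_int ((k + 1) * 2 ^ d) * (s / 2 ^ d)"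
    using upper pos by (intro mult_right_mono) (simp_all only: of_int_le_iff less_imp_le)
  also have "\<dots> = (real_of_int k + 1) * s"
    by (subst (2) s2) (simp add: field_simps)
  finally show "(real_of_int k' + 1) * (s / 2 ^ d) \<le> (real_of_int k + 1) * s" .
qed

lemma halfopen_box_sets:
  "{y::'a::euclidean_space. \<forall>i\<in>Basis. l i \<le> y \<bullet> i \<and> y \<bullet> i < u i} \<in> sets lebesgue"
proof -
  have "{y::'a. \<forall>i\<in>Basis. l i \<le> y \<bullet> i \<and> y \<bullet> i < u i}
      = (\<Inter>i\<in>Basis. {y. l i \<le> y \<bullet> i} \<inter> {y. y \<bullet> i < u i})"
    by auto
  also have "\<dots> \<in> sets lborel"
    by (intro sets.finite_INT finite_Basis sets.Int borel_closed borel_open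
        closed_halfspace_component_ge open_halfspace_component_lt) auto
  finally show ?thesis
    by (rule sets_completionI_sets)
qed

text \<open>The window \<open>[c, c + l]\<close> starts at the left end of the two intervals and is then pushed
  back into \<open>[a, a + h]\<close>; it has room for both because they meet and the longer one has length
  at most \<open>l\<close> unless the window is all of \<open>[a, a + h]\<close>.\<close>

lemma interval_window:
  fixes a x r \<rho> e s h l c :: real
  assumes "a \<le> x" "x \<le> a + h" "r \<le> x" "x \<le> r + \<rho>" "e \<le> x" "x \<le> e + s"
    "a \<le> e" "e + s \<le> a + h" "s > 0" "l = min (2 * s) h" "\<rho> \<le> s \<or> l = h"
    "c = min (max a (min r e)) (a + h - l)"
  shows "a \<le> c" "c + l \<le> a + h"
    "\<And>y. r \<le> y \<Longrightarrow> y \<le> r + \<rho> \<Longrightarrow> a \<le> y \<Longrightarrow> y \<le> a + h \<Longrightarrow> c \<le> y \<and> y \<le> c + l"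
    "\<And>y. e \<le> y \<Longrightarrow> y \<le> e + s \<Longrightarrow> c \<le> y \<and> y \<le> c + l"
  using assms by (auto simp: min_def max_def split: if_splits)

lemma cube_window:
  fixes a e r x :: "'a::euclidean_space"
  assumes x: "x \<in> cbox a (a + h *\<^sub>R One)" "x \<in> cbox r (r + \<rho> *\<^sub>R One)" "x \<in> cbox e (e + s *\<^sub>R One)"
    and e: "cbox e (e + s *\<^sub>R One) \<subseteq> cbox a (a + h *\<^sub>R One)"
    and "s > 0" "\<rho> \<le> s \<or> min (2 * s) h = h"
  obtains c where "cbox c (c + min (2 * s) h *\<^sub>R One) \<subseteq> cbox a (a + h *\<^sub>R One)"
    "cbox r (r + \<rho> *\<^sub>R One) \<inter> cbox a (a + h *\<^sub>R One) \<subseteq> cbox c (c + min (2 * s) h *\<^sub>R One)"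
    "cbox e (e + s *\<^sub>R One) \<subseteq> cbox c (c + min (2 * s) h *\<^sub>R One)"
proof -
  define l where "l = min (2 * s) h"
  define c where "c = (\<Sum>i\<in>Basis. min (max (a \<bullet> i) (min (r \<bullet> i) (e \<bullet> i))) (a \<bullet> i + h - l) *\<^sub>R i)"
  have "e \<in> cbox e (e + s *\<^sub>R One)" "e + s *\<^sub>R One \<in> cbox e (e + s *\<^sub>R One)"
    using \<open>s > 0\<close> by (auto simp: mem_box inner_add_left)
  then have "e \<in> cbox a (a + h *\<^sub>R One)" "e + s *\<^sub>R One \<in> cbox a (a + h *\<^sub>R One)"
    using e by blast+
  then have e_in: "a \<bullet> i \<le> e \<bullet> i" "e \<bullet> i + s \<le> a \<bullet> i + h" if "i \<in> Basis" for i
    using that unfolding mem_cube by (auto simp: inner_add_left)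
  have c: "c \<bullet> i = min (max (a \<bullet> i) (min (r \<bullet> i) (e \<bullet> i))) (a \<bullet> i + h - l)" if "i \<in> Basis" for i
    unfolding c_def using that by (simp add: inner_sum_left inner_Basis if_distrib cong: if_cong)
  have window: "a \<bullet> i \<le> c \<bullet> i \<and> c \<bullet> i + l \<le> a \<bullet> i + h
      \<and> (\<forall>y. r \<bullet> i \<le> y \<and> y \<le> r \<bullet> i + \<rho> \<and> a \<bullet> i \<le> y \<and> y \<le> a \<bullet> i + h \<longrightarrow> c \<bullet> i \<le> y \<and> y \<le> c \<bullet> i + l)
      \<and> (\<forall>y. e \<bullet> i \<le> y \<and> y \<le> e \<bullet> i + s \<longrightarrow> c \<bullet> i \<le> y \<and> y \<le> c \<bullet> i + l)"
    if i: "i \<in> Basis" for i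
  proof -
    have "a \<bullet> i \<le> x \<bullet> i" "x \<bullet> i \<le> a \<bullet> i + h" "r \<bullet> i \<le> x \<bullet> i" "x \<bullet> i \<le> r \<bullet> i + \<rho>"
      "e \<bullet> i \<le> x \<bullet> i" "x \<bullet> i \<le> e \<bullet> i + s"
      using x i unfolding mem_cube by auto
    note window = interval_window[OF this e_in[OF i] \<open>s > 0\<close> l_def assms(6)[folded l_def] c[OF i]]
    show ?thesis
      using window(1,2) window(3)[of "_ :: real"] window(4)[of "_ :: real"] by blast
  qed
  show ?thesis
  proof (rule that; unfold l_def[symmetric])
    show "cbox c (c + l *\<^sub>R One) \<subseteq> cbox a (a + h *\<^sub>R One)"
      using window unfolding subset_iff mem_cube by force
    show "cbox r (r + \<rho> *\<^sub>R One) \<inter> cbox a (a + h *\<^sub>R One) \<subseteq> cbox c (c + l *\<^sub>R One)"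
      using window unfolding subset_iff Int_iff mem_cube by blast
    show "cbox e (e + s *\<^sub>R One) \<subseteq> cbox c (c + l *\<^sub>R One)"
      using window unfolding subset_iff mem_cube by blast
  qed
qed

text \<open>The dyadic subcubes of the cube with corner \<open>a\<close> and side \<open>h\<close>: a node \<open>(j, k)\<close>
  stands for the subcube of generation \<open>j\<close> whose corner has coordinates \<open>a \<bullet> i + k i * side j\<close>.
  The closed cubes \<open>dcube\<close> are used for averages, while the half-open cells \<open>dcell\<close>
  partition the half-open cube at every generation.\<close>

locale dyadic_grid =
  fixes a :: "'a::euclidean_space" and h :: real
  assumes h_pos: "h > 0"
begin

definition side :: "nat \<Rightarrow> real" where
  "side j = h / 2 ^ j"

definition index :: "nat \<Rightarrow> 'a \<Rightarrow> 'a \<Rightarrow> nat" where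
  "index j y = (\<lambda>i\<in>Basis. nat \<lfloor>(y \<bullet> i - a \<bullet> i) / side j\<rfloor>)"

definition node :: "nat \<Rightarrow> 'a \<Rightarrow> nat \<times> ('a \<Rightarrow> nat)" where
  "node j y = (j, index j y)"

definition corner :: "nat \<times> ('a \<Rightarrow> nat) \<Rightarrow> 'a" where
  "corner d = a + (\<Sum>i\<in>Basis. (real (snd d i) * side (fst d)) *\<^sub>R i)"

definition dcube :: "nat \<times> ('a \<Rightarrow> nat) \<Rightarrow> 'a set" where
  "dcube d = cbox (corner d) (corner d + side (fst d) *\<^sub>R One)"

definition half_open_cube :: "'a set" where
  "half_open_cube = {y. \<forall>i\<in>Basis. a \<bullet> i \<le> y \<bullet> i \<and> y \<bullet> i < a \<bullet> i + h}"

definition dcell :: "nat \<times> ('a \<Rightarrow> nat) \<Rightarrow> 'a set" where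
  "dcell d = {y \<in> half_open_cube. index (fst d) y = snd d}"

lemma side_gt_0 [simp]: "side j > 0"
  unfolding side_def using h_pos by simp

lemma side_neq_0 [simp]: "side j \<noteq> 0"
  using side_gt_0 by (metis less_irrefl)

lemma side_Suc: "side (Suc j) = side j / 2"
  unfolding side_def by simp

lemma base_mem_half_open_cube: "a \<in> half_open_cube"
  by (simp add: half_open_cube_def h_pos)

lemma fst_node [simp]: "fst (node j y) = j"
  unfolding node_def by simp

lemma corner_inner: "i \<in> Basis \<Longrightarrow> corner d \<bullet> i = a \<bullet> i + real (snd d i) * side (fst d)"
  unfolding corner_def
  by (simp add: inner_add_left inner_sum_left inner_Basis if_distrib cong: if_cong)

lemma index_bounds:
  assumes "y \<in> half_open_cube" "i \<in> Basis"
  shows "corner (node j y) \<bullet> i \<le> y \<bullet> i" "y \<bullet> i < corner (node j y) \<bullet> i + side j"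
    and "index j y i < 2 ^ j"
    and "real (index j y i) = real_of_int \<lfloor>(y \<bullet> i - a \<bullet> i) / side j\<rfloor>"
proof -
  let ?u = "(y \<bullet> i - a \<bullet> i) / side j"
  have "0 \<le> y \<bullet> i - a \<bullet> i" "y \<bullet> i - a \<bullet> i < h"
    using assms by (auto simp: half_open_cube_def)
  then have "0 \<le> ?u" "?u < h / side j"
    by (simp_all add: divide_strict_right_mono divide_nonneg_pos)
  then have "0 \<le> ?u" "?u < 2 ^ j"
    using h_pos by (simp_all add: side_def)
  moreover have index: "real (index j y i) = real_of_int \<lfloor>?u\<rfloor>"
    unfolding index_def using assms \<open>0 \<le> ?u\<close> by simp
  ultimately show "real (index j y i) = real_of_int \<lfloor>?u\<rfloor>"
    by simp
  have "real (index j y i) < 2 ^ j"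
    using index \<open>?u < 2 ^ j\<close> by linarith
  then show "index j y i < 2 ^ j"
    by (metis of_nat_less_iff of_nat_numeral of_nat_power)
  have "real_of_int \<lfloor>?u\<rfloor> * side j \<le> ?u * side j"
    by (rule mult_right_mono) (linarith, simp add: less_imp_le)
  moreover have "?u * side j < (real_of_int \<lfloor>?u\<rfloor> + 1) * side j"
    by (rule mult_strict_right_mono) (linarith, simp)
  moreover have "?u * side j = y \<bullet> i - a \<bullet> i"
    "(real_of_int \<lfloor>?u\<rfloor> + 1) * side j = real_of_int \<lfloor>?u\<rfloor> * side j + side j"
    by (simp_all add: distrib_right)
  ultimately
  show "corner (node j y) \<bullet> i \<le> y \<bullet> i" "y \<bullet> i < corner (node j y) \<bullet> i + side j"
    unfolding corner_inner[OF assms(2)] node_def fst_conv snd_conv index by linarith+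
qed

lemma mem_dcube: "y \<in> dcube d \<longleftrightarrow> (\<forall>i\<in>Basis. corner d \<bullet> i \<le> y \<bullet> i \<and> y \<bullet> i \<le> corner d \<bullet> i + side (fst d))"
  unfolding dcube_def by (rule mem_cube)

lemma corner_add_side_le:
  assumes "x \<in> half_open_cube" "i \<in> Basis"
  shows "corner (node j x) \<bullet> i + side j \<le> a \<bullet> i + h"
proof -
  have "real (index j x i) + 1 \<le> 2 ^ j"
    using index_bounds(3)[OF assms] by (metis Suc_leI of_nat_Suc of_nat_le_iff of_nat_numeral of_nat_power add.commute)
  then have "(real (index j x i) + 1) * side j \<le> 2 ^ j * side j"
    by (rule mult_right_mono) (simp add: less_imp_le)
  then show ?thesis
    using assms(2) by (simp add: corner_inner node_def side_def algebra_simps)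
qed

lemma le_corner: "i \<in> Basis \<Longrightarrow> a \<bullet> i \<le> corner d \<bullet> i"
  by (simp add: corner_inner less_imp_le)

lemma dcell_node:
  assumes x: "x \<in> half_open_cube"
  shows "dcell (node j x) = {y. \<forall>i\<in>Basis. corner (node j x) \<bullet> i \<le> y \<bullet> i \<and> y \<bullet> i < corner (node j x) \<bullet> i + side j}"
    (is "_ = ?B")
proof
  show "dcell (node j x) \<subseteq> ?B"
  proof
    fix y assume "y \<in> dcell (node j x)"
    then have "y \<in> half_open_cube" "node j x = node j y"
      by (auto simp: dcell_def node_def)
    then show "y \<in> ?B"
      using index_bounds(1,2) by auto
  qed
next
  show "?B \<subseteq> dcell (node j x)"
  proof
    fix y assume y: "y \<in> ?B"
    have y_in: "y \<in> half_open_cube"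
      unfolding half_open_cube_def
    proof (intro CollectI ballI)
      fix i :: 'a assume i: "i \<in> Basis"
      then have "corner (node j x) \<bullet> i \<le> y \<bullet> i" "y \<bullet> i < corner (node j x) \<bullet> i + side j"
        using y by auto
      then show "a \<bullet> i \<le> y \<bullet> i \<and> y \<bullet> i < a \<bullet> i + h"
        using le_corner[OF i, of "node j x"] corner_add_side_le[OF x i, of j] by linarith
    qed
    have "index j y i = index j x i" for i
    proof (cases "i \<in> Basis")
      case True
      have "\<lfloor>(y \<bullet> i - a \<bullet> i) / side j\<rfloor> = int (index j x i)"
        unfolding floor_eq_iff using y True
        by (auto simp: corner_inner node_def field_simps)
      then show ?thesis
        using index_bounds(4)[OF y_in True, of j] by simp
    qed (simp add: index_def)
    then show "y \<in> dcell (node j x)"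
      using y_in by (auto simp: dcell_def node_def)
  qed
qed

lemma dcell_subset_dcube: "dcell d \<subseteq> dcube d"
proof
  fix y assume y: "y \<in> dcell d"
  then have "y \<in> half_open_cube" "d = node (fst d) y"
    by (auto simp: dcell_def node_def)
  then show "y \<in> dcube d"
    using index_bounds(1,2) unfolding mem_dcube by (metis fst_node less_imp_le)
qed

lemma mem_dcell_node: "x \<in> half_open_cube \<Longrightarrow> x \<in> dcell (node j x)"
  by (simp add: dcell_def node_def)

lemma mem_dcube_node: "x \<in> half_open_cube \<Longrightarrow> x \<in> dcube (node j x)"
  using mem_dcell_node dcell_subset_dcube by blast

lemma node_of_mem_dcell: "y \<in> dcell d \<Longrightarrow> y \<in> half_open_cube \<and> d = node (fst d) y"
  by (cases d) (auto simp: dcell_def node_def)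

lemma box_subset_dcell:
  "x \<in> half_open_cube \<Longrightarrow> box (corner (node j x)) (corner (node j x) + side j *\<^sub>R One) \<subseteq> dcell (node j x)"
  unfolding dcell_node by (force simp: mem_box inner_add_left)

lemma node_mono:
  assumes x: "x \<in> half_open_cube" and "j \<le> j'"
  shows "dcell (node j' x) \<subseteq> dcell (node j x)" "dcube (node j' x) \<subseteq> dcube (node j x)"
proof -
  have side': "side j' = side j / 2 ^ (j' - j)"
    using assms(2) by (simp add: side_def power_diff)
  have nested: "corner (node j x) \<bullet> i \<le> corner (node j' x) \<bullet> i
      \<and> corner (node j' x) \<bullet> i + side j' \<le> corner (node j x) \<bullet> i + side j" if i: "i \<in> Basis" for i
    using floor_divide_refine[of "x \<bullet> i - a \<bullet> i" "side j" "j' - j"] x i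
    unfolding corner_inner[OF i] node_def fst_conv snd_conv
      index_bounds(4)[OF x i, of j] index_bounds(4)[OF x i, of j'] side'
    by (auto simp: half_open_cube_def algebra_simps)
  show "dcell (node j' x) \<subseteq> dcell (node j x)"
    unfolding dcell_node[OF x]
  proof (intro subsetI CollectI ballI)
    fix y and i :: 'a assume "y \<in> {y. \<forall>i\<in>Basis. corner (node j' x) \<bullet> i \<le> y \<bullet> i \<and> y \<bullet> i < corner (node j' x) \<bullet> i + side j'}"
      and i: "i \<in> Basis"
    then show "corner (node j x) \<bullet> i \<le> y \<bullet> i \<and> y \<bullet> i < corner (node j x) \<bullet> i + side j"
      using nested[OF i] by auto
  qed
  show "dcube (node j' x) \<subseteq> dcube (node j x)"
  proof
    fix y assume "y \<in> dcube (node j' x)"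
    then show "y \<in> dcube (node j x)"
      using nested unfolding mem_dcube fst_node by force
  qed
qed

lemma index_eq_if_le:
  assumes "x \<in> half_open_cube" "y \<in> half_open_cube" "j \<le> j'" "index j' y = index j' x"
  shows "index j y = index j x"
proof -
  have "y \<in> dcell (node j' x)"
    using assms by (simp add: dcell_def node_def)
  then have "y \<in> dcell (node j x)"
    using node_mono(1)[OF assms(1,3)] by blast
  then show ?thesis
    by (simp add: dcell_def node_def)
qed

lemma sets_dcell [simp]: "dcell d \<in> sets lebesgue"
proof (cases "dcell d = {}")
  case False
  then obtain y where "y \<in> dcell d" by blast
  then have y: "y \<in> half_open_cube" and d: "d = node (fst d) y"
    using node_of_mem_dcell by blast+
  show ?thesis
    using dcell_node[OF y, of "fst d"] d
      halfopen_box_sets[of "\<lambda>i. corner d \<bullet> i" "\<lambda>i. corner d \<bullet> i + side (fst d)"]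
    by (metis fst_node)
qed simp

lemma bounded_dcube [simp]: "bounded (dcube d)"
  by (simp add: dcube_def)

lemma sets_dcube [simp]: "dcube d \<in> sets lebesgue"
  by (simp add: dcube_def)

lemma measure_dcube: "measure lebesgue (dcube d) = side (fst d) ^ DIM('a)"
  unfolding dcube_def by (rule measure_cube) (simp add: less_imp_le)

lemma measure_dcube_pos: "measure lebesgue (dcube d) > 0"
  by (simp add: measure_dcube)

lemma is_cube_dcube: "is_cube (dcube d)"
  unfolding is_cube_def dcube_def using side_gt_0 by blast

lemma AE_dcell_eq_dcube:
  assumes "x \<in> half_open_cube"
  shows "AE y in lebesgue. y \<in> dcell (node j x) \<longleftrightarrow> y \<in> dcube (node j x)"
proof (rule AE_I')
  show "dcube (node j x) - box (corner (node j x)) (corner (node j x) + side j *\<^sub>R One) \<in> null_sets lebesgue"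
    unfolding dcube_def fst_node by (rule cube_minus_box_null)
  show "{y \<in> space lebesgue. \<not> (y \<in> dcell (node j x) \<longleftrightarrow> y \<in> dcube (node j x))}
      \<subseteq> dcube (node j x) - box (corner (node j x)) (corner (node j x) + side j *\<^sub>R One)"
    using box_subset_dcell[OF assms, of j] dcell_subset_dcube[of "node j x"] by auto
qed

lemma emeasure_dcell_node:
  assumes "x \<in> half_open_cube"
  shows "emeasure lebesgue (dcell (node j x)) = emeasure lebesgue (dcube (node j x))"
  by (rule emeasure_eq_AE[OF AE_dcell_eq_dcube[OF assms] sets_dcell sets_dcube])

definition base_node :: "nat \<times> ('a \<Rightarrow> nat)" where
  "base_node = node 0 a"

lemma dcube_base_node: "dcube base_node = cbox a (a + h *\<^sub>R One)"
proof -
  have "snd base_node i = 0" if "i \<in> Basis" for i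
    using index_bounds(3)[OF base_mem_half_open_cube that, of 0] by (simp add: base_node_def node_def)
  then have "corner base_node = a"
    unfolding corner_def by simp
  then show ?thesis
    unfolding dcube_def side_def base_node_def by simp
qed

lemma dcell_base_node: "dcell base_node = half_open_cube"
  using index_bounds(3)[of _ _ 0] base_mem_half_open_cube
  by (auto simp: dcell_def base_node_def node_def index_def)

lemma cube_minus_half_open_null: "cbox a (a + h *\<^sub>R One) - half_open_cube \<in> null_sets lebesgue"
proof (rule null_sets_subset[OF cube_minus_box_null])
  show "cbox a (a + h *\<^sub>R One) - half_open_cube \<in> sets lebesgue"
    using sets_dcell[of base_node] dcell_base_node by auto
  show "cbox a (a + h *\<^sub>R One) - half_open_cube \<subseteq> cbox a (a + h *\<^sub>R One) - box a (a + h *\<^sub>R One)"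
    by (auto simp: half_open_cube_def mem_box inner_add_left less_imp_le)
qed

lemma emeasure_half_open_cube: "emeasure lebesgue half_open_cube = ennreal (h ^ DIM('a))"
proof -
  have "emeasure lebesgue half_open_cube = emeasure lebesgue (cbox a (a + h *\<^sub>R One))"
    using emeasure_dcell_node[OF base_mem_half_open_cube, of 0]
    by (simp only: dcell_base_node dcube_base_node flip: base_node_def)
  then show ?thesis
    using emeasure_cube[of h a] h_pos by simp
qed

lemma countable_nodes: "countable {node j x | j x. x \<in> half_open_cube}"
proof (rule countable_subset)
  show "{node j x | j x. x \<in> half_open_cube} \<subseteq> (SIGMA j:UNIV. PiE Basis (\<lambda>_. {..<(2::nat) ^ j}))"
    using index_bounds(3) by (auto simp: node_def index_def)
  show "countable (SIGMA j:UNIV. PiE Basis (\<lambda>_. {..<(2::nat) ^ j}))"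
    by (rule countable_SIGMA) (auto intro!: countable_finite finite_PiE)
qed

lemma choose_generation:
  assumes "\<rho> > 0"
  obtains j where "h \<le> \<rho> \<and> j = 0 \<or> \<rho> \<le> side j \<and> side (Suc j) < \<rho>"
proof (cases "h \<le> \<rho>")
  case False
  obtain N where "h / \<rho> < 2 ^ N"
    using real_arch_pow[of 2 "h / \<rho>"] by auto
  then have "side (Suc N) < \<rho>"
    using assms h_pos by (simp add: side_def field_simps)
  define j where "j = (LEAST j. side (Suc j) < \<rho>)"
  have "side (Suc j) < \<rho>"
    unfolding j_def by (rule LeastI) fact
  moreover have "\<rho> \<le> side j"
  proof (cases j)
    case 0
    then show ?thesis using False by (simp add: side_def)
  next
    case (Suc j')
    then show ?thesis
      using not_less_Least[of j' "\<lambda>j. side (Suc j) < \<rho>"] unfolding j_def by simp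
  qed
  ultimately show ?thesis
    using that by blast
qed (use that in blast)

lemma covering_cube:
  assumes x: "x \<in> half_open_cube" and \<rho>: "\<rho> > 0" and xR: "x \<in> cbox r (r + \<rho> *\<^sub>R One)"
  obtains j c l where "0 < l" "l \<le> 4 * \<rho>" "l \<le> 2 * side j"
    "cbox c (c + l *\<^sub>R One) \<subseteq> cbox a (a + h *\<^sub>R One)"
    "cbox r (r + \<rho> *\<^sub>R One) \<inter> cbox a (a + h *\<^sub>R One) \<subseteq> cbox c (c + l *\<^sub>R One)"
    "dcube (node j x) \<subseteq> cbox c (c + l *\<^sub>R One)"
proof -
  obtain j where j: "h \<le> \<rho> \<and> j = 0 \<or> \<rho> \<le> side j \<and> side (Suc j) < \<rho>"
    using choose_generation[OF \<rho>] by blast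
  have alt: "\<rho> \<le> side j \<or> min (2 * side j) h = h" and l4: "min (2 * side j) h \<le> 4 * \<rho>"
    using j h_pos \<rho> unfolding side_Suc by (auto simp: side_def min_def)
  have "x \<in> cbox a (a + h *\<^sub>R One)"
    using x unfolding half_open_cube_def mem_cube by (auto intro: less_imp_le)
  moreover have "dcube (node j x) \<subseteq> cbox a (a + h *\<^sub>R One)"
    using le_corner corner_add_side_le[OF x] unfolding subset_iff mem_dcube mem_cube fst_node
    by (meson order_trans)
  ultimately obtain c where "cbox c (c + min (2 * side j) h *\<^sub>R One) \<subseteq> cbox a (a + h *\<^sub>R One)"
    "cbox r (r + \<rho> *\<^sub>R One) \<inter> cbox a (a + h *\<^sub>R One) \<subseteq> cbox c (c + min (2 * side j) h *\<^sub>R One)"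
    "dcube (node j x) \<subseteq> cbox c (c + min (2 * side j) h *\<^sub>R One)"
    using cube_window[OF _ xR _ _ side_gt_0 alt] mem_dcube_node[OF x]
    unfolding dcube_def fst_node by blast
  moreover have "0 < min (2 * side j) h"
    using h_pos by simp
  ultimately show ?thesis
    using that l4 by (meson min.cobounded1)
qed

end

section \<open>The dyadic stopping time\<close>

locale dyadic_stopping_time = locally_integrable_function f + dyadic_grid a h
  for f :: "'a::euclidean_space \<Rightarrow> real" and a :: 'a and h
begin

definition mu :: "nat \<times> ('a \<Rightarrow> nat) \<Rightarrow> real" where
  "mu d = avg f (dcube d)"

definition osc :: "nat \<times> ('a \<Rightarrow> nat) \<Rightarrow> real" where
  "osc d = mean_osc f (dcube d)"

lemma osc_nonneg: "osc d \<ge> 0"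
  unfolding osc_def by (rule mean_osc_nonneg)

lemma osc_le_sharp: "x \<in> dcube d \<Longrightarrow> ennreal (osc d) \<le> sharp f x"
  unfolding osc_def by (rule mean_osc_le_sharp[OF is_cube_dcube])

lemma deviation_dcube_mu: "deviation f (dcube d) (mu d) = osc d * measure lebesgue (dcube d)"
proof -
  have "measure lebesgue (dcube d) \<noteq> 0"
    using measure_dcube_pos[of d] by linarith
  then show ?thesis
    unfolding mu_def osc_def by (rule deviation_avg_eq)
qed

lemma abs_mu_diff_le:
  "\<bar>mu d - c\<bar> * measure lebesgue (dcube d) \<le> deviation f (dcube d) c"
  unfolding mu_def by (rule abs_avg_diff_le_deviation[OF sets_dcube bounded_dcube])

lemma dcell_bounded [simp]: "bounded (dcell d)"
  using dcell_subset_dcube bounded_dcube bounded_subset by blast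

lemma deviation_dcell:
  assumes "y \<in> dcell d"
  shows "deviation f (dcell d) c = deviation f (dcube d) c"
proof -
  obtain j where y: "y \<in> half_open_cube" and d: "d = node j y"
    using node_of_mem_dcell[OF assms] by blast
  have "(\<integral>\<^sup>+z\<in>dcell d. ennreal \<bar>f z - c\<bar> \<partial>lebesgue) = (\<integral>\<^sup>+z\<in>dcube d. ennreal \<bar>f z - c\<bar> \<partial>lebesgue)"
    unfolding d using AE_dcell_eq_dcube[OF y, of j]
    by (intro nn_integral_cong_AE) (auto split: split_indicator)
  then have "ennreal (deviation f (dcell d) c) = ennreal (deviation f (dcube d) c)"
    using set_nn_integral_eq_deviation[OF sets_dcell dcell_bounded]
      set_nn_integral_eq_deviation[OF sets_dcube bounded_dcube] by simp
  then show ?thesis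
    by (simp add: deviation_nonneg)
qed

lemma measure_dcell:
  assumes "y \<in> dcell d"
  shows "measure lebesgue (dcell d) = measure lebesgue (dcube d)"
proof -
  obtain j where "y \<in> half_open_cube" "d = node j y"
    using node_of_mem_dcell[OF assms] by blast
  then show ?thesis
    unfolding measure_def using emeasure_dcell_node by simp
qed

text \<open>The Calderon--Zygmund stopping time for \<open>|f - mu n|\<close> on \<open>n\<close> at height \<open>2 * osc n\<close>: the
  stopping cells of \<open>n\<close> are the maximal dyadic subcubes on which this height is exceeded, each
  one reached as the first stopping generation along the dyadic chain of any of its points.\<close>

definition stops :: "nat \<times> ('a \<Rightarrow> nat) \<Rightarrow> nat \<times> ('a \<Rightarrow> nat) \<Rightarrow> bool" where
  "stops n d \<longleftrightarrow> deviation f (dcube d) (mu n) > 2 * osc n * measure lebesgue (dcube d)"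

definition stop_gen :: "nat \<times> ('a \<Rightarrow> nat) \<Rightarrow> 'a \<Rightarrow> nat" where
  "stop_gen n y = (LEAST j. fst n \<le> j \<and> stops n (node j y))"

definition stopping_cells :: "nat \<times> ('a \<Rightarrow> nat) \<Rightarrow> (nat \<times> ('a \<Rightarrow> nat)) set" where
  "stopping_cells n = {node (stop_gen n y) y | y. y \<in> dcell n \<and> (\<exists>j \<ge> fst n. stops n (node j y))}"

lemma not_stops_imp_abs_mu_diff_le:
  assumes "\<not> stops n d"
  shows "\<bar>mu d - mu n\<bar> \<le> 2 * osc n"
proof (rule mult_right_le_imp_le)
  show "\<bar>mu d - mu n\<bar> * measure lebesgue (dcube d) \<le> 2 * osc n * measure lebesgue (dcube d)"
    using abs_mu_diff_le[of d "mu n"] assms unfolding stops_def by linarith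
qed (rule measure_dcube_pos)

lemma not_stops_self: "\<not> stops n n"
proof -
  have "osc n * measure lebesgue (dcube n) \<le> 2 * osc n * measure lebesgue (dcube n)"
    using osc_nonneg[of n] measure_dcube_pos[of n] by (intro mult_right_mono) linarith+
  then show ?thesis
    unfolding stops_def deviation_dcube_mu by linarith
qed

context
  fixes n y
  assumes ex_stops: "\<exists>j \<ge> fst n. stops n (node j y)"
begin

lemma stop_gen_ge: "fst n \<le> stop_gen n y"
  and stops_stop_gen: "stops n (node (stop_gen n y) y)"
  using LeastI_ex[OF ex_stops] unfolding stop_gen_def by simp_all

lemma not_stops_before_stop_gen: "fst n \<le> j \<Longrightarrow> j < stop_gen n y \<Longrightarrow> \<not> stops n (node j y)"
  unfolding stop_gen_def by (drule not_less_Least) simp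

lemma stop_gen_le: "fst n \<le> j \<Longrightarrow> stops n (node j y) \<Longrightarrow> stop_gen n y \<le> j"
  unfolding stop_gen_def by (rule Least_le) simp

end

lemma stop_gen_eq:
  assumes y: "y \<in> half_open_cube" "\<exists>j \<ge> fst n. stops n (node j y)" and z: "z \<in> half_open_cube"
    and same: "index (stop_gen n y) z = index (stop_gen n y) y"
  shows "(\<exists>j \<ge> fst n. stops n (node j z)) \<and> stop_gen n z = stop_gen n y"
proof -
  have agree: "node j z = node j y" if "j \<le> stop_gen n y" for j
    using index_eq_if_le[OF y(1) z that same] by (simp add: node_def)
  then have "stops n (node (stop_gen n y) z)"
    using stops_stop_gen[OF y(2)] by simp
  then have ex: "\<exists>j \<ge> fst n. stops n (node j z)"
    using stop_gen_ge[OF y(2)] by blast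
  have "stop_gen n z \<le> stop_gen n y"
    using stop_gen_le[OF ex stop_gen_ge[OF y(2)]] agree stops_stop_gen[OF y(2)] by simp
  moreover have "\<not> stop_gen n z < stop_gen n y"
  proof
    assume less: "stop_gen n z < stop_gen n y"
    then have "stops n (node (stop_gen n z) y)"
      using stops_stop_gen[OF ex] agree[of "stop_gen n z"] by simp
    then show False
      using not_stops_before_stop_gen[OF y(2) stop_gen_ge[OF ex] less] by contradiction
  qed
  ultimately show ?thesis
    using ex by simp
qed

lemma stopping_cellsE:
  assumes "d \<in> stopping_cells n"
  obtains y where "y \<in> dcell n" "\<exists>j \<ge> fst n. stops n (node j y)" "d = node (stop_gen n y) y"
  using assms unfolding stopping_cells_def by blast

lemma stops_stopping_cell: "d \<in> stopping_cells n \<Longrightarrow> stops n d"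
  by (erule stopping_cellsE) (simp add: stops_stop_gen)

lemma stopping_cell_node:
  assumes "d \<in> stopping_cells n"
  obtains y j j' where "y \<in> half_open_cube" "j \<le> j'" "n = node j y" "d = node j' y"
proof -
  obtain y where y: "y \<in> dcell n" "\<exists>j \<ge> fst n. stops n (node j y)" and d: "d = node (stop_gen n y) y"
    using assms by (rule stopping_cellsE)
  show ?thesis
    using that[OF _ stop_gen_ge[OF y(2)] _ d] node_of_mem_dcell[OF y(1)] by blast
qed

lemma dcell_stopping_cell_subset: "d \<in> stopping_cells n \<Longrightarrow> dcell d \<subseteq> dcell n"
  by (erule stopping_cell_node) (simp add: node_mono(1))

lemma stopping_cell_eq:
  assumes "d \<in> stopping_cells n" "z \<in> dcell d"
  shows "d = node (stop_gen n z) z"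
proof -
  obtain y where y: "y \<in> dcell n" "\<exists>j \<ge> fst n. stops n (node j y)" and d: "d = node (stop_gen n y) y"
    using assms(1) by (rule stopping_cellsE)
  have "z \<in> half_open_cube" "index (stop_gen n y) z = index (stop_gen n y) y"
    using assms(2) unfolding d by (simp_all add: dcell_def node_def)
  then show ?thesis
    using stop_gen_eq[OF conjunct1[OF node_of_mem_dcell[OF y(1)]] y(2)] d by (simp add: node_def)
qed

lemma disjoint_stopping_cells: "disjoint_family_on dcell (stopping_cells n)"
  unfolding disjoint_family_on_def using stopping_cell_eq by blast

lemma countable_stopping_cells: "countable (stopping_cells n)"
  by (rule countable_subset[OF _ countable_nodes])
    (auto simp: stopping_cells_def dest: node_of_mem_dcell)

lemma deviation_dcell_mu:
  "x \<in> dcell n \<Longrightarrow> deviation f (dcell n) (mu n) = osc n * measure lebesgue (dcell n)"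
  using deviation_dcell measure_dcell deviation_dcube_mu by simp

lemma deviation_stopping_cell_gt:
  assumes d: "d \<in> stopping_cells n"
  shows "2 * osc n * measure lebesgue (dcell d) < deviation f (dcell d) (mu n)"
proof -
  obtain y j' where "y \<in> half_open_cube" "d = node j' y"
    using stopping_cell_node[OF d] by blast
  then have "y \<in> dcell d"
    by (simp add: mem_dcell_node)
  then show ?thesis
    using stops_stopping_cell[OF d] deviation_dcell measure_dcell unfolding stops_def by simp
qed

lemma osc_pos_if_stopping_cell:
  assumes d: "d \<in> stopping_cells n"
  shows "osc n > 0"
proof (rule ccontr)
  assume "\<not> osc n > 0"
  then have "osc n = 0"
    using osc_nonneg by (simp add: order_less_le)
  obtain y where "y \<in> dcell n"
    using d by (rule stopping_cellsE)
  then have "deviation f (dcell n) (mu n) = 0"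
    using deviation_dcell_mu \<open>osc n = 0\<close> by simp
  moreover have "deviation f (dcell d) (mu n) \<le> deviation f (dcell n) (mu n)"
    using dcell_stopping_cell_subset[OF d] by (intro deviation_mono) auto
  ultimately show False
    using deviation_stopping_cell_gt[OF d] \<open>osc n = 0\<close> by simp
qed

lemma stopping_cells_halve: "2 * emeasure lebesgue (\<Union>(dcell ` stopping_cells n)) \<le> emeasure lebesgue (dcell n)"
proof (cases "stopping_cells n = {}")
  case False
  then obtain d where d: "d \<in> stopping_cells n" by blast
  obtain x where x: "x \<in> dcell n"
    using d by (rule stopping_cellsE)
  have pos: "osc n > 0"
    by (rule osc_pos_if_stopping_cell[OF d])
  have "ennreal (2 * osc n) * emeasure lebesgue (\<Union>(dcell ` stopping_cells n))
      \<le> ennreal (osc n * measure lebesgue (dcell n))"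
    unfolding deviation_dcell_mu[OF x, symmetric]
    using countable_stopping_cells[of n] disjoint_stopping_cells[of n] dcell_stopping_cell_subset[of _ n]
      deviation_stopping_cell_gt[of _ n] osc_nonneg[of n]
    by (intro emeasure_UN_le_deviation) (auto intro: less_imp_le)
  then have "ennreal (osc n) * (2 * emeasure lebesgue (\<Union>(dcell ` stopping_cells n)))
      \<le> ennreal (osc n) * ennreal (measure lebesgue (dcell n))"
    using pos by (simp add: ennreal_mult mult.assoc mult.left_commute)
  then have "2 * emeasure lebesgue (\<Union>(dcell ` stopping_cells n)) \<le> ennreal (measure lebesgue (dcell n))"
    using pos by (subst (asm) ennreal_mult_le_mult_iff) auto
  also have "\<dots> = emeasure lebesgue (dcell n)"
    using bounded_set_imp_lmeasurable[OF dcell_bounded sets_dcell]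
    by (rule emeasure_eq_ennreal_measure[OF fmeasurableD2, symmetric])
  finally show ?thesis .
qed simp

sublocale stopping: halving_tree lebesgue dcell stopping_cells
  by unfold_locales
    (use countable_stopping_cells dcell_stopping_cell_subset disjoint_stopping_cells
      stopping_cells_halve in auto)

definition exceptional :: "real \<Rightarrow> nat \<times> ('a \<Rightarrow> nat) \<Rightarrow> 'a set" where
  "exceptional \<theta> n = {x \<in> dcell n. \<exists>s \<ge> 0. sharp f x = ennreal s \<and>
      (\<exists>j \<ge> fst n. \<bar>mu (node j x) - mu n\<bar> > \<theta> * s)}"

text \<open>The parent of a stopping cell does not stop and has \<open>2^n\<close> times its measure.\<close>

lemma stopping_cell_mu_close:
  assumes x: "x \<in> dcell n" and ex_stops: "\<exists>j \<ge> fst n. stops n (node j x)"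
  shows "\<bar>mu (node (stop_gen n x) x) - mu n\<bar> \<le> 2 ^ (DIM('a) + 1) * osc n"
proof -
  define d where "d = node (stop_gen n x) x"
  define p where "p = node (stop_gen n x - 1) x"
  obtain j where x_in: "x \<in> half_open_cube" and n: "n = node j x"
    using node_of_mem_dcell[OF x] by blast
  have "stop_gen n x \<noteq> fst n"
    using stops_stop_gen[OF ex_stops] not_stops_self[of n] n by auto
  then have gen: "fst n \<le> stop_gen n x - 1" "stop_gen n x - 1 < stop_gen n x"
    "stop_gen n x = Suc (stop_gen n x - 1)"
    using stop_gen_ge[OF ex_stops] by auto
  have not_stops_p: "\<not> stops n p"
    unfolding p_def by (rule not_stops_before_stop_gen[OF ex_stops gen(1,2)])
  have measure_p: "measure lebesgue (dcube p) = 2 ^ DIM('a) * measure lebesgue (dcube d)"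
    unfolding p_def d_def measure_dcube fst_node
    by (subst (2) gen(3)) (simp add: side_Suc power_divide)
  have "\<bar>mu d - mu n\<bar> * measure lebesgue (dcube d) \<le> deviation f (dcube d) (mu n)"
    by (rule abs_mu_diff_le)
  also have "\<dots> \<le> deviation f (dcube p) (mu n)"
    unfolding d_def p_def using node_mono(2)[OF x_in less_imp_le[OF gen(2)]]
    by (intro deviation_mono) auto
  also have "\<dots> \<le> 2 * osc n * measure lebesgue (dcube p)"
    using not_stops_p unfolding stops_def by simp
  also have "\<dots> = 2 ^ (DIM('a) + 1) * osc n * measure lebesgue (dcube d)"
    unfolding measure_p by simp
  finally show ?thesis
    unfolding d_def using measure_dcube_pos by (simp add: mult_le_cancel_right)
qed

lemma osc_le_of_mem_dcell:
  assumes "x \<in> dcell n" "sharp f x = ennreal s" "s \<ge> 0"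
  shows "osc n \<le> s"
proof -
  have "x \<in> dcube n"
    using assms(1) dcell_subset_dcube by blast
  then have "ennreal (osc n) \<le> ennreal s"
    using osc_le_sharp[of x n] assms(2) by simp
  then show ?thesis
    using assms(3) by simp
qed

lemma stops_if_far:
  assumes "x \<in> dcell n" "sharp f x = ennreal s" "s \<ge> 0" "\<bar>mu d - mu n\<bar> > 2 * s"
  shows "stops n d"
  using not_stops_imp_abs_mu_diff_le osc_le_of_mem_dcell[OF assms(1-3)] assms(4) by fastforce

text \<open>A point far from \<open>mu n\<close> along its chain passes through a stopping cell \<open>d\<close> whose average
  is still close to \<open>mu n\<close>, so it is almost as far from \<open>mu d\<close>.\<close>

lemma exceptional_Suc_subset:
  "exceptional (real (Suc m) * 2 ^ (DIM('a) + 1)) n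
    \<subseteq> \<Union>(exceptional (real m * 2 ^ (DIM('a) + 1)) ` stopping_cells n)"
proof
  let ?K = "2 ^ (DIM('a) + 1) :: real"
  fix x assume "x \<in> exceptional (real (Suc m) * ?K) n"
  then obtain s j where x: "x \<in> dcell n" and s: "s \<ge> 0" "sharp f x = ennreal s"
    and j: "fst n \<le> j" and far: "\<bar>mu (node j x) - mu n\<bar> > real (Suc m) * ?K * s"
    unfolding exceptional_def by blast
  have "2 * s \<le> real (Suc m) * ?K * s"
    using power_increasing[of 1 "DIM('a) + 1" "2::real"] s(1)
    by (intro mult_right_mono) (auto intro: order_trans[of _ ?K] simp: algebra_simps)
  then have stops_j: "stops n (node j x)"
    using stops_if_far[OF x s(2,1)] far by simp
  then have ex_stops: "\<exists>j \<ge> fst n. stops n (node j x)"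
    using j by blast
  define d where "d = node (stop_gen n x) x"
  have "\<bar>mu d - mu n\<bar> \<le> ?K * s"
    unfolding d_def using stopping_cell_mu_close[OF x ex_stops] osc_le_of_mem_dcell[OF x s(2,1)]
    by (meson mult_left_mono order_trans zero_le_numeral zero_le_power)
  then have "\<bar>mu (node j x) - mu d\<bar> > real m * ?K * s"
    using far by (simp add: algebra_simps)
  moreover have "fst d \<le> j"
    unfolding d_def using stop_gen_le[OF ex_stops j stops_j] by simp
  moreover have "x \<in> dcell d"
    unfolding d_def using node_of_mem_dcell[OF x] by (blast intro: mem_dcell_node)
  ultimately have "x \<in> exceptional (real m * ?K) d"
    unfolding exceptional_def using s by blast
  moreover have "d \<in> stopping_cells n"
    unfolding d_def stopping_cells_def using x ex_stops by blast
  ultimately show "x \<in> \<Union>(exceptional (real m * ?K) ` stopping_cells n)"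
    by blast
qed

lemma exceptional_subset_descendants:
  "exceptional (real m * 2 ^ (DIM('a) + 1)) n \<subseteq> stopping.descendants m n"
proof (induction m arbitrary: n)
  case 0
  then show ?case
    by (auto simp: exceptional_def)
next
  case (Suc m)
  then show ?case
    using exceptional_Suc_subset[of m n] by fastforce
qed

lemma maximal_average_le:
  assumes x: "x \<in> half_open_cube" and s: "sharp f x = ennreal s" "s \<ge> 0"
    and R: "is_cube R" "x \<in> R"
  obtains j where
    "(\<integral>\<^sup>+y\<in>R. ennreal \<bar>indicator (dcube base_node) y * (f y - mu base_node)\<bar> \<partial>lebesgue) / emeasure lebesgue R
      \<le> ennreal (4 ^ DIM('a) * ((1 + 2 ^ DIM('a)) * s + \<bar>mu (node j x) - mu base_node\<bar>))"
proof -
  let ?n = "DIM('a)"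
  obtain r \<rho> where \<rho>: "\<rho> > 0" and R_eq: "R = cbox r (r + \<rho> *\<^sub>R One)"
    using R(1) unfolding is_cube_def by blast
  obtain j c l where l: "0 < l" "l \<le> 4 * \<rho>" "l \<le> 2 * side j"
    and RT: "R \<inter> dcube base_node \<subseteq> cbox c (c + l *\<^sub>R One)"
    and DT: "dcube (node j x) \<subseteq> cbox c (c + l *\<^sub>R One)"
    using covering_cube[OF x \<rho> R(2)[unfolded R_eq]] unfolding R_eq dcube_base_node by metis
  define T where "T = cbox c (c + l *\<^sub>R One)"
  define bound where "bound = (1 + 2 ^ ?n) * s + \<bar>mu (node j x) - mu base_node\<bar>"
  have measure_T: "measure lebesgue T = l ^ ?n"
    unfolding T_def using l by (intro measure_cube) simp
  have "measure lebesgue T \<le> 2 ^ ?n * measure lebesgue (dcube (node j x))"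
    unfolding measure_T measure_dcube fst_node
    using power_mono[OF l(3), of ?n] l by (simp add: power_mult_distrib)
  moreover have "is_cube T" "x \<in> T"
    using l DT mem_dcube_node[OF x] unfolding T_def is_cube_def by blast+
  ultimately have "deviation f T (mu base_node) \<le> l ^ ?n * bound"
    using deviation_le_sharp_add[OF _ _ s _ DT[folded T_def] measure_dcube_pos] measure_T
    unfolding bound_def mu_def by simp
  then have "deviation f T (mu base_node) / \<rho> ^ ?n \<le> (l / \<rho>) ^ ?n * bound"
    using \<rho> by (simp add: divide_right_mono power_divide)
  also have "\<dots> \<le> 4 ^ ?n * bound"
    using l \<rho> s(2) unfolding bound_def
    by (intro mult_right_mono power_mono) (simp_all add: field_simps)
  finally have ratio: "deviation f T (mu base_node) / \<rho> ^ ?n \<le> 4 ^ ?n * bound" .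
  have "(\<integral>\<^sup>+y\<in>R. ennreal \<bar>indicator (dcube base_node) y * (f y - mu base_node)\<bar> \<partial>lebesgue) / emeasure lebesgue R
      \<le> ennreal (deviation f T (mu base_node)) / ennreal (\<rho> ^ ?n)"
    using set_nn_integral_indicator_le_deviation[of T R] RT emeasure_cube[of \<rho> r] \<rho>
    unfolding T_def R_eq by (simp add: divide_right_mono_ennreal)
  also have "\<dots> \<le> ennreal (4 ^ ?n * bound)"
    using ratio \<rho> by (simp add: divide_ennreal deviation_nonneg ennreal_leI)
  finally show ?thesis
    using that unfolding bound_def by blast
qed

lemma large_ratio_imp_exceptional:
  assumes nonconstant: "mean_osc f (dcube base_node) > 0" and t: "t > 0" and x: "x \<in> half_open_cube"
    and ratio: "maxop (\<lambda>y. indicator (dcube base_node) y * (f y - mu base_node)) x / sharp f x > ennreal t"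
  shows "x \<in> exceptional (t / 4 ^ DIM('a) - (1 + 2 ^ DIM('a))) base_node"
proof -
  let ?n = "DIM('a)"
  let ?G = "\<lambda>y. indicator (dcube base_node) y * (f y - mu base_node)"
  have "sharp f x \<noteq> \<infinity>"
    using ratio by (intro notI) simp
  then obtain s where s: "sharp f x = ennreal s" "s \<ge> 0"
    by (cases "sharp f x") auto
  have "x \<in> dcube base_node"
    using x dcell_base_node dcell_subset_dcube by blast
  then have "ennreal (mean_osc f (dcube base_node)) \<le> ennreal s"
    using mean_osc_le_sharp[OF is_cube_dcube, of x base_node] s(1) by simp
  then have s_pos: "s > 0"
    using nonconstant by (simp add: ennreal_le_iff2 order_less_le_trans)
  have "maxop ?G x > ennreal (t * s)"
    using ennreal_mult_less_of_less_divide[OF s_pos _ ratio[unfolded s]] t by simp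
  then obtain R where R: "is_cube R" "x \<in> R"
    and average: "ennreal (t * s) < (\<integral>\<^sup>+y\<in>R. ennreal \<bar>?G y\<bar> \<partial>lebesgue) / emeasure lebesgue R"
    unfolding maxop_def less_SUP_iff by blast
  obtain j where "(\<integral>\<^sup>+y\<in>R. ennreal \<bar>?G y\<bar> \<partial>lebesgue) / emeasure lebesgue R
      \<le> ennreal (4 ^ ?n * ((1 + 2 ^ ?n) * s + \<bar>mu (node j x) - mu base_node\<bar>))"
    using maximal_average_le[OF x s R] by blast
  then have "ennreal (t * s) < ennreal (4 ^ ?n * ((1 + 2 ^ ?n) * s + \<bar>mu (node j x) - mu base_node\<bar>))"
    by (rule order_less_le_trans[OF average])
  then have "t * s < 4 ^ ?n * ((1 + 2 ^ ?n) * s + \<bar>mu (node j x) - mu base_node\<bar>)"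
    using t s_pos by (subst (asm) ennreal_less_iff) auto
  then have "\<bar>mu (node j x) - mu base_node\<bar> > (t / 4 ^ ?n - (1 + 2 ^ ?n)) * s"
    by (simp add: field_simps)
  moreover have "x \<in> dcell base_node"
    using x dcell_base_node by simp
  ultimately show ?thesis
    unfolding exceptional_def using s by (auto simp: base_node_def)
qed

lemma exceptional_antimono:
  assumes "\<theta>' \<le> \<theta>"
  shows "exceptional \<theta> n \<subseteq> exceptional \<theta>' n"
proof
  fix x assume "x \<in> exceptional \<theta> n"
  with assms show "x \<in> exceptional \<theta>' n"
    unfolding exceptional_def by (blast intro: order_le_less_trans mult_right_mono)
qed

lemma exceptional_subset_descendants_floor:
  "exceptional \<theta> n \<subseteq> stopping.descendants (nat \<lfloor>\<theta> / 2 ^ (DIM('a) + 1)\<rfloor>) n"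
proof (cases "nat \<lfloor>\<theta> / 2 ^ (DIM('a) + 1)\<rfloor> = 0")
  case True
  then show ?thesis
    by (auto simp: exceptional_def)
next
  case False
  then have "real (nat \<lfloor>\<theta> / 2 ^ (DIM('a) + 1)\<rfloor>) \<le> \<theta> / 2 ^ (DIM('a) + 1)"
    by linarith
  then have "real (nat \<lfloor>\<theta> / 2 ^ (DIM('a) + 1)\<rfloor>) * 2 ^ (DIM('a) + 1) \<le> \<theta>"
    by (simp add: pos_le_divide_eq)
  then show ?thesis
    using exceptional_antimono exceptional_subset_descendants by blast
qed

end

lemma (in dyadic_stopping_time) outer_lmeasure_large_ratio_le:
  assumes nonconstant: "\<not> (\<exists>k. AE x in lebesgue. x \<in> cbox a (a + h *\<^sub>R One) \<longrightarrow> f x = k)"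
    and t: "t > 0"
  shows "outer_lmeasure {x \<in> cbox a (a + h *\<^sub>R One).
      maxop (\<lambda>y. indicator (cbox a (a + h *\<^sub>R One)) y * (f y - avg f (cbox a (a + h *\<^sub>R One)))) x
        / sharp f x > ennreal t}
    \<le> ennreal (h ^ DIM('a) / 2 ^ nat \<lfloor>(t / 4 ^ DIM('a) - (1 + 2 ^ DIM('a))) / 2 ^ (DIM('a) + 1)\<rfloor>)"
    (is "outer_lmeasure ?E \<le> ennreal (_ / 2 ^ ?m)")
proof -
  let ?Q = "cbox a (a + h *\<^sub>R One)"
  let ?D = "stopping.descendants ?m base_node"
  have Q: "dcube base_node = ?Q" "avg f ?Q = mu base_node"
    by (simp_all add: dcube_base_node mu_def)
  have "mean_osc f (dcube base_node) > 0"
    using nonconstant unfolding Q(1) by (intro mean_osc_pos_if_nonconstant) auto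
  then have "?E \<subseteq> (?Q - half_open_cube) \<union> ?D"
    using large_ratio_imp_exceptional[OF _ t] exceptional_subset_descendants_floor
    unfolding Q by blast
  then have "outer_lmeasure ?E \<le> emeasure lebesgue ((?Q - half_open_cube) \<union> ?D)"
    using null_setsD2[OF cube_minus_half_open_null] stopping.sets_descendants
    by (intro outer_lmeasure_le sets.Un) auto
  also have "\<dots> = emeasure lebesgue ?D"
    by (subst Un_commute) (rule emeasure_Un_null_set[OF stopping.sets_descendants cube_minus_half_open_null])
  also have "\<dots> \<le> ennreal (h ^ DIM('a) / 2 ^ ?m)"
  proof -
    have "ennreal (2 ^ ?m) * ennreal (h ^ DIM('a) / 2 ^ ?m) = ennreal (h ^ DIM('a))"
      using h_pos by (simp add: ennreal_mult[symmetric])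
    moreover have "ennreal (2 ^ ?m) = (2::ennreal) ^ ?m"
      using ennreal_power[of 2 ?m] by simp
    ultimately have "ennreal (2 ^ ?m) * emeasure lebesgue ?D \<le> ennreal (2 ^ ?m) * ennreal (h ^ DIM('a) / 2 ^ ?m)"
      using stopping.emeasure_descendants_le[of ?m base_node] emeasure_half_open_cube
      by (simp add: dcell_base_node)
    then show ?thesis
      by (subst (asm) ennreal_mult_le_mult_iff) auto
  qed
  finally show ?thesis .
qed

lemma inverse_power_nat_floor_le: "1 / 2 ^ nat \<lfloor>v\<rfloor> \<le> 2 * exp (- ln 2 * v :: real)"
proof -
  have "(2::real) ^ nat \<lfloor>v\<rfloor> = exp (real (nat \<lfloor>v\<rfloor>) * ln 2)"
    by (simp add: exp_of_nat_mult)
  then have "1 / 2 ^ nat \<lfloor>v\<rfloor> = exp (- (real (nat \<lfloor>v\<rfloor>) * ln 2))"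
    by (simp add: exp_minus inverse_eq_divide)
  also have "\<dots> \<le> exp (- ((v - 1) * ln 2))"
    unfolding exp_le_cancel_iff by (intro le_imp_neg_le mult_right_mono) (linarith, simp)
  also have "\<dots> = exp (ln 2 + - ln 2 * v)"
    by (rule arg_cong[where f = exp]) (simp add: algebra_simps)
  also have "\<dots> = exp (ln 2) * exp (- ln 2 * v)"
    by (rule exp_add)
  finally show ?thesis
    by simp
qed

definition decay_constant :: "nat \<Rightarrow> real" where
  "decay_constant n = 2 * exp (ln 2 * (1 + 2 ^ n) / 2 ^ (n + 1))"

definition decay_rate :: "nat \<Rightarrow> real" where
  "decay_rate n = ln 2 / (4 ^ n * 2 ^ (n + 1))"

lemma inverse_power_generation_le:
  "1 / 2 ^ nat \<lfloor>(t / 4 ^ n - (1 + 2 ^ n)) / 2 ^ (n + 1)\<rfloor> \<le> decay_constant n * exp (- decay_rate n * t)"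
proof -
  define v where "v = (t / 4 ^ n - (1 + 2 ^ n)) / 2 ^ (n + 1)"
  have "- ln 2 * v = ln 2 * (1 + 2 ^ n) / 2 ^ (n + 1) + - decay_rate n * t"
    by (simp add: v_def decay_rate_def field_simps)
  then have "2 * exp (- ln 2 * v) = decay_constant n * exp (- decay_rate n * t)"
    by (simp only: exp_add decay_constant_def mult.assoc)
  then show ?thesis
    using inverse_power_nat_floor_le[of v] unfolding v_def by simp
qed

theorem theorem5p1:
  shows "\<exists>C c::real. C > 0 \<and> c > 0 \<and>
    (\<forall>(Q::'a::euclidean_space set) (f::'a \<Rightarrow> real) (t::real).
      is_cube Q \<and> locally_integrable f \<and>
      \<not> (\<exists>k. AE x in lebesgue. x \<in> Q \<longrightarrow> f x = k) \<and> t > 0 \<longrightarrow>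
      outer_lmeasure {x \<in> Q. maxop (\<lambda>y. indicator Q y * (f y - avg f Q)) x / sharp f x > ennreal t}
        \<le> ennreal (C * exp (- c * t) * measure lebesgue Q))"
proof (intro exI conjI allI impI)
  let ?n = "DIM('a)"
  show "decay_constant ?n > 0" "decay_rate ?n > 0"
    by (simp_all add: decay_constant_def decay_rate_def)
  fix Q :: "'a set" and f :: "'a \<Rightarrow> real" and t :: real
  assume "is_cube Q \<and> locally_integrable f \<and> \<not> (\<exists>k. AE x in lebesgue. x \<in> Q \<longrightarrow> f x = k) \<and> t > 0"
  then obtain a h where Q: "Q = cbox a (a + h *\<^sub>R One)" and "h > 0" "locally_integrable f"
    and nonconstant: "\<not> (\<exists>k. AE x in lebesgue. x \<in> Q \<longrightarrow> f x = k)" and t: "t > 0"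
    unfolding is_cube_def by blast
  then interpret dyadic_stopping_time f a h
    by unfold_locales
  have "measure lebesgue Q = h ^ ?n"
    unfolding Q using \<open>h > 0\<close> by (intro measure_cube) simp
  then have "h ^ ?n / 2 ^ nat \<lfloor>(t / 4 ^ ?n - (1 + 2 ^ ?n)) / 2 ^ (?n + 1)\<rfloor>
      \<le> decay_constant ?n * exp (- decay_rate ?n * t) * measure lebesgue Q"
    using mult_left_mono[OF inverse_power_generation_le, of "h ^ ?n"] \<open>h > 0\<close>
    by (simp add: mult.commute)
  then show "outer_lmeasure {x \<in> Q. maxop (\<lambda>y. indicator Q y * (f y - avg f Q)) x / sharp f x > ennreal t}
    \<le> ennreal (decay_constant ?n * exp (- decay_rate ?n * t) * measure lebesgue Q)"
    using outer_lmeasure_large_ratio_le[OF nonconstant[unfolded Q] t] unfolding Q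
    by (meson ennreal_leI order_trans)
qed

end
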